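(* Let $M=\mathrm{Mon}\langle \Sigma \mid R\rangle$ be a finitely presented monoid and let $\mathfrak{R}$ be a rewriting system for $M$ that is complete and cyclically complete. Let $u,v\in\Sigma^*$. (i) If $u$ and $v$ are transposed, then $\rho(u)\simeq\rho(v)$. (ii) If $\rho(u)\simeq\rho(v)$, then $u\equiv_M v$.
   Context: $\Sigma^*$ is the free monoid on the alphabet $\Sigma$; $=_M$ is equality in $M$. A rewriting system $\mathfrak{R}$ is a set of rules $l\to r$ with $l,r\in\Sigma^*$; $plq\to prq$ is one rewriting step. $\mathfrak{R}$ is complete for $M$ if it is terminating, confluent, and the congruence it generates on $\Sigma^*$ is $=_M$. $u\simeq v$ means $u=ab$, $v=ba$ for some words $a,b$ (cyclic conjugates in $\Sigma^*$). $u\rightsquigarrow v$ means some cyclic conjugate $\tilde u$ of $u$ (possibly $u$) satisfies $\tilde u\to v$; $\rightsquigarrow^*$ is its reflexive–transitive closure. $\mathfrak{R}$ is cyclically terminating if there is no infinite sequence $u_1\rightsquigarrow u_2\rightsquigarrow\cdots$; cyclically confluent if whenever $w\rightsquigarrow^* u$ and $w\rightsquigarrow^* v$ there exist $z\simeq z'$ with $u\rightsquigarrow^* z$ and $v\rightsquigarrow^* z'$; cyclically complete if both. A word is cyclically irreducible if it and all its cyclic conjugates are irreducible modulo $\mathfrak{R}$. $\rho(u)$ denotes the cyclically irreducible form of $u$, i.e. a cyclically irreducible word $w$ with $u\rightsquigarrow^* w$ (unique up to $\simeq$ when $\mathfrak{R}$ is cyclically complete). Words $u,v$ are transposed if there exist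 $x,y\in\Sigma^*$ with $u=_M xy$ and $v=_M yx$. $u\equiv_M v$ means there exist $x,y\in\Sigma^*$ with $ux=_M xv$ and $yu=_M vy$. *)

theory Defs
  imports Main
begin

definition rstep :: "('a list \<times> 'a list) set \<Rightarrow> 'a list \<Rightarrow> 'a list \<Rightarrow> bool" where
  "rstep Rs u v \<longleftrightarrow> (\<exists>p q l r. (l, r) \<in> Rs \<and> u = p @ l @ q \<and> v = p @ r @ q)"

definition eqM :: "('a list \<times> 'a list) set \<Rightarrow> 'a list \<Rightarrow> 'a list \<Rightarrow> bool" where
  "eqM R u v \<longleftrightarrow> equivclp (rstep R) u v"

definition terminating :: "('a list \<times> 'a list) set \<Rightarrow> bool" where
  "terminating Rs \<longleftrightarrow> wfP (\<lambda>v u. rstep Rs u v)"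

definition confluent :: "('a list \<times> 'a list) set \<Rightarrow> bool" where
  "confluent Rs \<longleftrightarrow> (\<forall>w u v. (rstep Rs)\<^sup>*\<^sup>* w u \<and> (rstep Rs)\<^sup>*\<^sup>* w v \<longrightarrow>
     (\<exists>z. (rstep Rs)\<^sup>*\<^sup>* u z \<and> (rstep Rs)\<^sup>*\<^sup>* v z))"

definition complete_for :: "('a list \<times> 'a list) set \<Rightarrow> ('a list \<times> 'a list) set \<Rightarrow> bool" where
  "complete_for Rs R \<longleftrightarrow> terminating Rs \<and> confluent Rs \<and>
     (\<forall>u v. equivclp (rstep Rs) u v \<longleftrightarrow> eqM R u v)"

definition cconj :: "'a list \<Rightarrow> 'a list \<Rightarrow> bool" where
  "cconj u v \<longleftrightarrow> (\<exists>a b. u = a @ b \<and> v = b @ a)"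

definition cstep :: "('a list \<times> 'a list) set \<Rightarrow> 'a list \<Rightarrow> 'a list \<Rightarrow> bool" where
  "cstep Rs u v \<longleftrightarrow> (\<exists>u'. cconj u u' \<and> rstep Rs u' v)"

definition cyc_terminating :: "('a list \<times> 'a list) set \<Rightarrow> bool" where
  "cyc_terminating Rs \<longleftrightarrow> wfP (\<lambda>v u. cstep Rs u v)"

definition cyc_confluent :: "('a list \<times> 'a list) set \<Rightarrow> bool" where
  "cyc_confluent Rs \<longleftrightarrow> (\<forall>w u v. (cstep Rs)\<^sup>*\<^sup>* w u \<and> (cstep Rs)\<^sup>*\<^sup>* w v \<longrightarrow>
     (\<exists>z z'. cconj z z' \<and> (cstep Rs)\<^sup>*\<^sup>* u z \<and> (cstep Rs)\<^sup>*\<^sup>* v z'))"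

definition cyc_complete :: "('a list \<times> 'a list) set \<Rightarrow> bool" where
  "cyc_complete Rs \<longleftrightarrow> cyc_terminating Rs \<and> cyc_confluent Rs"

definition irreducible :: "('a list \<times> 'a list) set \<Rightarrow> 'a list \<Rightarrow> bool" where
  "irreducible Rs w \<longleftrightarrow> \<not> (\<exists>v. rstep Rs w v)"

definition cyc_irreducible :: "('a list \<times> 'a list) set \<Rightarrow> 'a list \<Rightarrow> bool" where
  "cyc_irreducible Rs w \<longleftrightarrow> (\<forall>w'. cconj w w' \<longrightarrow> irreducible Rs w')"

definition rho :: "('a list \<times> 'a list) set \<Rightarrow> 'a list \<Rightarrow> 'a list" where
  "rho Rs u = (SOME w. cyc_irreducible Rs w \<and> (cstep Rs)\<^sup>*\<^sup>* u w)"

definition transposed :: "('a list \<times> 'a list) set \<Rightarrow> 'a list \<Rightarrow> 'a list \<Rightarrow> bool" where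
  "transposed R u v \<longleftrightarrow> (\<exists>x y. eqM R u (x @ y) \<and> eqM R v (y @ x))"

definition equivM :: "('a list \<times> 'a list) set \<Rightarrow> 'a list \<Rightarrow> 'a list \<Rightarrow> bool" where
  "equivM R u v \<longleftrightarrow> (\<exists>x y. eqM R (u @ x) (x @ v) \<and> eqM R (y @ u) (v @ y))"

end

theory Submission
  imports Defs "HOL-Library.Confluence"
begin

text \<open>
  A cyclic rewriting step never leaves the \<open>\<equiv>\<^sub>M\<close>-class of a word, because both a rewriting step
  and a cyclic conjugation \<open>ab \<simeq> ba\<close> (witnessed by \<open>ab\<cdot>a = a\<cdot>ba\<close> and \<open>b\<cdot>ab = ba\<cdot>b\<close>) do; this
  gives (ii). For (i), cyclic confluence makes the cyclically irreducible form unique up to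
  \<open>\<simeq>\<close> along any \<open>\<rightsquigarrow>\<close>-path, and a cyclic step out of a word is also a cyclic step out of each of
  its conjugates, so \<open>\<rho>\<close> is invariant under \<open>\<simeq>\<close>. By completeness and the Church--Rosser
  property, words equal in \<open>M\<close> share an ordinary (hence cyclic) descendant, so \<open>\<rho>\<close> is also
  invariant under \<open>=\<^sub>M\<close>; transposed words \<open>u =\<^sub>M xy\<close>, \<open>v =\<^sub>M yx\<close> therefore have conjugate forms.
\<close>

lemma cconj_iff_rotate: "cconj u v \<longleftrightarrow> (\<exists>n. v = rotate n u)"
proof
  assume "cconj u v"
  then show "\<exists>n. v = rotate n u"
    unfolding cconj_def by (metis rotate_append)
next
  assume "\<exists>n. v = rotate n u"
  then show "cconj u v"
    unfolding cconj_def by (metis append_take_drop_id rotate_drop_take)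
qed

lemma cconj_refl: "cconj u u"
  unfolding cconj_iff_rotate by (metis rotate0 id_apply)

lemma cconj_sym: "cconj u v \<Longrightarrow> cconj v u"
  unfolding cconj_def by blast

lemma cconj_trans: "cconj u v \<Longrightarrow> cconj v w \<Longrightarrow> cconj u w"
  unfolding cconj_iff_rotate by (metis rotate_rotate)

lemma cstep_cconj_left: "cconj u v \<Longrightarrow> cstep Rs u t \<Longrightarrow> cstep Rs v t"
  unfolding cstep_def by (blast intro: cconj_trans cconj_sym)

lemma rtranclp_rstep_imp_cstep: "(rstep Rs)\<^sup>*\<^sup>* u t \<Longrightarrow> (cstep Rs)\<^sup>*\<^sup>* u t"
  unfolding cstep_def by (induction rule: rtranclp_induct) (auto intro: rtranclp.intros cconj_refl)

lemma cyc_irreducible_iff: "cyc_irreducible Rs w \<longleftrightarrow> (\<nexists>t. cstep Rs w t)"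
  unfolding cyc_irreducible_def irreducible_def cstep_def by blast

lemma cyc_irreducible_rtranclp_cstep_eq:
  "cyc_irreducible Rs w \<Longrightarrow> (cstep Rs)\<^sup>*\<^sup>* w z \<Longrightarrow> z = w"
  by (auto simp: cyc_irreducible_iff elim: converse_rtranclpE)

lemma rho_spec:
  assumes "cyc_terminating Rs"
  shows "cyc_irreducible Rs (rho Rs u) \<and> (cstep Rs)\<^sup>*\<^sup>* u (rho Rs u)"
proof -
  have "\<exists>w. cyc_irreducible Rs w \<and> (cstep Rs)\<^sup>*\<^sup>* u w"
    using assms[unfolded cyc_terminating_def]
  proof (induction u rule: wfp_induct_rule)
    case (less u)
    show ?case
    proof (cases "\<exists>t. cstep Rs u t")
      case True
      then obtain t where "cstep Rs u t" by blast
      with less.IH show ?thesis by (blast intro: converse_rtranclp_into_rtranclp)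
    qed (auto simp: cyc_irreducible_iff)
  qed
  then show ?thesis
    unfolding rho_def by (rule someI_ex)
qed

lemma cyc_irreducible_descendants_cconj:
  assumes "cyc_confluent Rs" "(cstep Rs)\<^sup>*\<^sup>* u w1" "(cstep Rs)\<^sup>*\<^sup>* u w2"
    and "cyc_irreducible Rs w1" "cyc_irreducible Rs w2"
  shows "cconj w1 w2"
proof -
  obtain z1 z2 where "cconj z1 z2" "(cstep Rs)\<^sup>*\<^sup>* w1 z1" "(cstep Rs)\<^sup>*\<^sup>* w2 z2"
    using assms(1-3) unfolding cyc_confluent_def by blast
  with assms(4,5) show ?thesis
    by (metis cyc_irreducible_rtranclp_cstep_eq)
qed

lemma rho_cconj_if_rtranclp_cstep:
  assumes "cyc_complete Rs" "(cstep Rs)\<^sup>*\<^sup>* u t"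
  shows "cconj (rho Rs u) (rho Rs t)"
proof -
  have cyc_term: "cyc_terminating Rs" and cyc_conf: "cyc_confluent Rs"
    using assms(1) unfolding cyc_complete_def by auto
  have "(cstep Rs)\<^sup>*\<^sup>* u (rho Rs t)"
    using assms(2) rho_spec[OF cyc_term, of t] by auto
  then show ?thesis
    using cyc_irreducible_descendants_cconj[OF cyc_conf] rho_spec[OF cyc_term] by blast
qed

lemma rho_cconj_if_cconj:
  assumes "cyc_complete Rs" "cconj u v"
  shows "cconj (rho Rs u) (rho Rs v)"
proof (cases "\<exists>t. cstep Rs u t")
  case True
  then obtain t where "cstep Rs u t" by blast
  moreover have "cstep Rs v t"
    using cstep_cconj_left[OF assms(2)] \<open>cstep Rs u t\<close> .
  ultimately have "cconj (rho Rs u) (rho Rs t)" "cconj (rho Rs v) (rho Rs t)"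
    using rho_cconj_if_rtranclp_cstep[OF assms(1)] by blast+
  then show ?thesis by (blast intro: cconj_trans cconj_sym)
next
  case False
  then have "cyc_irreducible Rs u" "cyc_irreducible Rs v"
    using cstep_cconj_left[OF cconj_sym[OF assms(2)]] by (auto simp: cyc_irreducible_iff)
  moreover have "cyc_terminating Rs"
    using assms(1) unfolding cyc_complete_def by simp
  ultimately have "rho Rs u = u" "rho Rs v = v"
    by (metis rho_spec cyc_irreducible_rtranclp_cstep_eq)+
  then show ?thesis using assms(2) by simp
qed

lemma equivclp_rstep_joinable:
  assumes "confluent Rs" "equivclp (rstep Rs) u v"
  shows "\<exists>z. (rstep Rs)\<^sup>*\<^sup>* u z \<and> (rstep Rs)\<^sup>*\<^sup>* v z"
proof -
  have "confluentp (rstep Rs)"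
    using assms(1) unfolding confluent_def by (intro confluentpI) blast
  then have "((rstep Rs)\<^sup>*\<^sup>* OO (rstep Rs)\<inverse>\<inverse>\<^sup>*\<^sup>*) u v"
    using assms(2) by (simp add: semiconfluentp_equivclp confluentp_imp_semiconfluentp)
  then show ?thesis
    unfolding rtranclp_conversep by blast
qed

lemma rho_cconj_if_eqM:
  assumes "complete_for Rs R" "cyc_complete Rs" "eqM R u v"
  shows "cconj (rho Rs u) (rho Rs v)"
proof -
  have "equivclp (rstep Rs) u v" "confluent Rs"
    using assms(1,3) unfolding complete_for_def by blast+
  then obtain z where "(rstep Rs)\<^sup>*\<^sup>* u z" "(rstep Rs)\<^sup>*\<^sup>* v z"
    using equivclp_rstep_joinable by blast
  then have "cconj (rho Rs u) (rho Rs z)" "cconj (rho Rs v) (rho Rs z)"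
    by (blast intro: rho_cconj_if_rtranclp_cstep[OF assms(2)] rtranclp_rstep_imp_cstep)+
  then show ?thesis by (blast intro: cconj_trans cconj_sym)
qed

lemma rstep_append_context: "rstep R p q \<Longrightarrow> rstep R (a @ p @ b) (a @ q @ b)"
  unfolding rstep_def by (metis append.assoc)

lemma eqM_append_context: "eqM R p q \<Longrightarrow> eqM R (a @ p @ b) (a @ q @ b)"
  unfolding eqM_def
proof (induction rule: equivclp_induct)
  case (step y z)
  with rstep_append_context show ?case by (meson equivclp_into_equivclp)
qed simp

lemma eqM_sym: "eqM R u v \<Longrightarrow> eqM R v u"
  unfolding eqM_def by (rule equivclp_sym)

lemma eqM_trans: "eqM R u v \<Longrightarrow> eqM R v w \<Longrightarrow> eqM R u w"
  unfolding eqM_def by (rule equivclp_trans)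

lemma equivM_sym: "equivM R u v \<Longrightarrow> equivM R v u"
  unfolding equivM_def using eqM_sym by blast

lemma equivM_trans:
  assumes "equivM R u v" "equivM R v w"
  shows "equivM R u w"
proof -
  obtain x y where x: "eqM R (u @ x) (x @ v)" and y: "eqM R (y @ u) (v @ y)"
    using assms(1) unfolding equivM_def by blast
  obtain x' y' where x': "eqM R (v @ x') (x' @ w)" and y': "eqM R (y' @ v) (w @ y')"
    using assms(2) unfolding equivM_def by blast
  have "eqM R (u @ x @ x') (x @ v @ x')" "eqM R (x @ v @ x') (x @ x' @ w)"
    using eqM_append_context[OF x, of "[]" x'] eqM_append_context[OF x', of x "[]"] by simp_all
  then have "eqM R (u @ (x @ x')) ((x @ x') @ w)" by (auto intro: eqM_trans)
  moreover have "eqM R (y' @ y @ u) (y' @ v @ y)" "eqM R (y' @ v @ y) (w @ y' @ y)"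
    using eqM_append_context[OF y, of y' "[]"] eqM_append_context[OF y', of "[]" y] by simp_all
  then have "eqM R ((y' @ y) @ u) (w @ (y' @ y))" by (auto intro: eqM_trans)
  ultimately show ?thesis unfolding equivM_def by blast
qed

lemma equivM_if_cconj: "cconj u v \<Longrightarrow> equivM R u v"
proof -
  assume "cconj u v"
  then obtain a b where "u = a @ b" "v = b @ a"
    unfolding cconj_def by blast
  then have "u @ a = a @ v" "b @ u = v @ b" by simp_all
  then show "equivM R u v"
    unfolding equivM_def eqM_def by (metis equivclp_refl)
qed

lemma equivM_if_eqM: "eqM R u v \<Longrightarrow> equivM R u v"
  unfolding equivM_def by (metis append_Nil append_Nil2)

lemma equivM_if_rtranclp_cstep:
  assumes "complete_for Rs R" "(cstep Rs)\<^sup>*\<^sup>* u t"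
  shows "equivM R u t"
  using assms(2)
proof (induction rule: rtranclp_induct)
  case base
  show ?case using equivM_if_cconj[OF cconj_refl] .
next
  case (step t t')
  then obtain s where "cconj t s" "rstep Rs s t'"
    unfolding cstep_def by blast
  moreover have "eqM R s t'"
    using assms(1) \<open>rstep Rs s t'\<close> unfolding complete_for_def by blast
  ultimately show ?case
    using step.IH by (blast intro: equivM_trans equivM_if_cconj equivM_if_eqM)
qed

theorem theorem3p3:
  fixes R Rs :: "('a::finite list \<times> 'a list) set" and u v :: "'a list"
  assumes "finite R"
    and "complete_for Rs R"
    and "cyc_complete Rs"
  shows "(transposed R u v \<longrightarrow> cconj (rho Rs u) (rho Rs v))
       \<and> (cconj (rho Rs u) (rho Rs v) \<longrightarrow> equivM R u v)"
proof (intro conjI impI)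
  assume "transposed R u v"
  then obtain x y where "eqM R u (x @ y)" "eqM R v (y @ x)"
    unfolding transposed_def by blast
  then have "cconj (rho Rs u) (rho Rs (x @ y))" "cconj (rho Rs v) (rho Rs (y @ x))"
    using rho_cconj_if_eqM[OF assms(2,3)] by blast+
  moreover have "cconj (rho Rs (x @ y)) (rho Rs (y @ x))"
    using rho_cconj_if_cconj[OF assms(3)] unfolding cconj_def by blast
  ultimately show "cconj (rho Rs u) (rho Rs v)"
    by (blast intro: cconj_trans cconj_sym)
next
  assume "cconj (rho Rs u) (rho Rs v)"
  moreover have "cyc_terminating Rs"
    using assms(3) unfolding cyc_complete_def by simp
  ultimately have "equivM R u (rho Rs u)" "equivM R (rho Rs u) (rho Rs v)" "equivM R (rho Rs v) v"
    using equivM_if_rtranclp_cstep[OF assms(2)] rho_spec equivM_if_cconj equivM_sym by blast+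
  then show "equivM R u v"
    by (blast intro: equivM_trans)
qed

end
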